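(* Let $A,B$ be non-empty compact subsets of $\mathbb{R}$. Then $\max\{\dim_HA,\dim_HB\}\le\dim_H\Lambda(A,B)$, where $\Lambda(A,B)\subseteq\mathbb{R}^2$ carries the Euclidean metric.
   Context: $\dim_H$ is Hausdorff dimension. For $b\in\mathbb{R}$, $\Lambda_A(b)=\{a\in A:|b-a|=\min_{a'\in A}|b-a'|\}$; the set of metric pairs is $\Lambda(A,B)=\{(a,b)\in A\times B:a\in\Lambda_A(b)\text{ or }b\in\Lambda_B(a)\}$. *)

theory Defs
  imports "HOL-Analysis.Analysis"
begin

text \<open>Cost of a covering set in the s-dimensional Hausdorff measure: diam(U)^s,
  with the usual conventions diam({})^s = 0 and diam(U)^0 = 1 for nonempty U.\<close>
definition hcost :: "real \<Rightarrow> 'a::metric_space set \<Rightarrow> ennreal" where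
  "hcost s U = (if U = {} then 0 else if s = 0 then 1 else ennreal (diameter U powr s))"

definition hausdorff_pre :: "real \<Rightarrow> real \<Rightarrow> 'a::metric_space set \<Rightarrow> ennreal" where
  "hausdorff_pre s \<delta> E =
     (INF U \<in> {U :: nat \<Rightarrow> 'a set. E \<subseteq> (\<Union>i. U i) \<and>
                 (\<forall>i. bounded (U i) \<and> diameter (U i) \<le> \<delta>)}.
        \<Sum>i. hcost s (U i))"

definition hausdorff_measure :: "real \<Rightarrow> 'a::metric_space set \<Rightarrow> ennreal" where
  "hausdorff_measure s E = (SUP \<delta> \<in> {0<..}. hausdorff_pre s \<delta> E)"

text \<open>Hausdorff dimension: inf {s \<ge> 0. H^s(E) = 0} (value \<infinity> if no such s).\<close>
definition hausdorff_dim :: "'a::metric_space set \<Rightarrow> ereal" where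
  "hausdorff_dim E = Inf {ereal s | s. 0 \<le> s \<and> hausdorff_measure s E = 0}"

definition nearest :: "real set \<Rightarrow> real \<Rightarrow> real set" where
  "nearest A b = {a \<in> A. \<forall>a' \<in> A. \<bar>b - a\<bar> \<le> \<bar>b - a'\<bar>}"

text \<open>Metric pairs; real \<times> real carries the Euclidean metric.\<close>
definition metric_pairs :: "real set \<Rightarrow> real set \<Rightarrow> (real \<times> real) set" where
  "metric_pairs A B = {(a, b) \<in> A \<times> B. a \<in> nearest A b \<or> b \<in> nearest B a}"

end

theory Submission
  imports Defs
begin

text \<open>Both coordinate projections of \<open>\<real>\<^sup>2\<close> are 1-Lipschitz, and a 1-Lipschitz map
  shrinks every covering set, so it cannot increase Hausdorff measure or dimension.
  Since \<open>B\<close> is closed and nonempty, every \<open>a \<in> A\<close> has a nearest point \<open>b \<in> B\<close>, and then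
  \<open>(a, b)\<close> is a metric pair; hence the first projection maps \<open>\<Lambda>(A, B)\<close> onto \<open>A\<close>, and
  symmetrically the second one maps it onto \<open>B\<close>.\<close>

lemma bounded_lipschitz_image:
  assumes "C-lipschitz_on U f" "bounded U"
  shows "bounded (f ` U)"
proof -
  obtain e where e: "\<And>x y. x \<in> U \<Longrightarrow> y \<in> U \<Longrightarrow> dist x y \<le> e"
    using \<open>bounded U\<close> by (auto simp: bounded_two_points)
  have "dist (f x) (f y) \<le> C * e" if "x \<in> U" "y \<in> U" for x y
    using lipschitz_onD[OF assms(1) that] e[OF that] lipschitz_on_nonneg[OF assms(1)]
    by (meson mult_left_mono order_trans)
  then show ?thesis
    by (auto simp: bounded_two_points)
qed

lemma diameter_lipschitz_image:
  assumes "C-lipschitz_on U f" "bounded U"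
  shows "diameter (f ` U) \<le> C * diameter U"
proof (cases "U = {}")
  case False
  have "dist (f x) (f y) \<le> C * diameter U" if "x \<in> U" "y \<in> U" for x y
    using lipschitz_onD[OF assms(1) that] diameter_bounded_bound[OF assms(2) that]
      lipschitz_on_nonneg[OF assms(1)]
    by (meson mult_left_mono order_trans)
  then show ?thesis
    using False by (auto simp: diameter_def intro!: cSUP_least)
qed (simp add: lipschitz_on_nonneg[OF assms(1)])

lemma hcost_mono:
  assumes "V \<subseteq> U" "bounded U" "0 \<le> s"
  shows "hcost s V \<le> hcost s U"
proof -
  have "diameter V powr s \<le> diameter U powr s"
    using assms diameter_ge_0[OF bounded_subset[OF assms(2,1)]]
    by (intro powr_mono2) (auto simp: diameter_subset)
  then show ?thesis
    using assms(1) by (auto simp: hcost_def ennreal_leI)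
qed

lemma hcost_lipschitz_image:
  assumes "1-lipschitz_on U f" "bounded U" "0 \<le> s"
  shows "hcost s (f ` U) \<le> hcost s U"
proof -
  have "diameter (f ` U) powr s \<le> diameter U powr s"
    using diameter_lipschitz_image[OF assms(1,2)] bounded_lipschitz_image[OF assms(1,2)] assms(3)
    by (intro powr_mono2) (auto simp: diameter_ge_0)
  then show ?thesis
    by (auto simp: hcost_def ennreal_leI)
qed

definition delta_covers :: "real \<Rightarrow> 'a::metric_space set \<Rightarrow> (nat \<Rightarrow> 'a set) set" where
  "delta_covers \<delta> E = {U. E \<subseteq> (\<Union>i. U i) \<and> (\<forall>i. bounded (U i) \<and> diameter (U i) \<le> \<delta>)}"

lemma hausdorff_pre_delta_covers:
  "hausdorff_pre s \<delta> E = (INF U \<in> delta_covers \<delta> E. \<Sum>i. hcost s (U i))"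
  by (simp add: hausdorff_pre_def delta_covers_def)

lemma lipschitz_image_delta_covers:
  assumes "1-lipschitz_on E f" "U \<in> delta_covers \<delta> E"
  shows "(\<lambda>i. f ` (U i \<inter> E)) \<in> delta_covers \<delta> (f ` E)"
proof -
  have U: "E \<subseteq> (\<Union>i. U i)" "\<And>i. bounded (U i)" "\<And>i. diameter (U i) \<le> \<delta>"
    using assms(2) by (auto simp: delta_covers_def)
  have lip: "1-lipschitz_on (U i \<inter> E) f" for i
    using assms(1) by (rule lipschitz_on_subset) simp
  have "diameter (f ` (U i \<inter> E)) \<le> diameter (U i)" for i
  proof -
    have "bounded (U i \<inter> E)"
      using U(2)[of i] by (rule bounded_subset) simp
    then have "diameter (f ` (U i \<inter> E)) \<le> diameter (U i \<inter> E)"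
      using diameter_lipschitz_image[OF lip] by simp
    also have "\<dots> \<le> diameter (U i)"
      using U(2)[of i] by (intro diameter_subset) auto
    finally show ?thesis .
  qed
  moreover have "f ` E \<subseteq> (\<Union>i. f ` (U i \<inter> E))"
    using U(1) by blast
  ultimately show ?thesis
    using U(2,3) bounded_lipschitz_image[OF lip] unfolding delta_covers_def
    by (blast intro: order_trans)
qed

lemma hausdorff_pre_lipschitz_image_le:
  assumes "1-lipschitz_on E f" "0 \<le> s"
  shows "hausdorff_pre s \<delta> (f ` E) \<le> hausdorff_pre s \<delta> E"
  unfolding hausdorff_pre_delta_covers
proof (rule INF_greatest)
  fix U assume U: "U \<in> delta_covers \<delta> E"
  then have bounded: "bounded (U i)" for i
    by (simp add: delta_covers_def)
  have "(INF V \<in> delta_covers \<delta> (f ` E). \<Sum>i. hcost s (V i))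
        \<le> (\<Sum>i. hcost s (f ` (U i \<inter> E)))"
    using lipschitz_image_delta_covers[OF assms(1) U] by (rule INF_lower)
  also have "\<dots> \<le> (\<Sum>i. hcost s (U i))"
  proof (rule suminf_le)
    fix i
    have "1-lipschitz_on (U i \<inter> E) f"
      using assms(1) by (rule lipschitz_on_subset) simp
    then have "hcost s (f ` (U i \<inter> E)) \<le> hcost s (U i \<inter> E)"
      using bounded assms(2) by (intro hcost_lipschitz_image) auto
    also have "\<dots> \<le> hcost s (U i)"
      using bounded assms(2) by (intro hcost_mono) auto
    finally show "hcost s (f ` (U i \<inter> E)) \<le> hcost s (U i)" .
  qed (rule summableI)+
  finally show "(INF V \<in> delta_covers \<delta> (f ` E). \<Sum>i. hcost s (V i)) \<le> (\<Sum>i. hcost s (U i))" .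
qed

lemma hausdorff_measure_lipschitz_image_le:
  assumes "1-lipschitz_on E f" "0 \<le> s"
  shows "hausdorff_measure s (f ` E) \<le> hausdorff_measure s E"
  unfolding hausdorff_measure_def
  using hausdorff_pre_lipschitz_image_le[OF assms] by (blast intro: SUP_mono)

lemma hausdorff_dim_lipschitz_image_le:
  assumes "1-lipschitz_on E f"
  shows "hausdorff_dim (f ` E) \<le> hausdorff_dim E"
  unfolding hausdorff_dim_def
proof (rule Inf_superset_mono, safe)
  fix s assume "0 \<le> s" "hausdorff_measure s E = 0"
  then have "hausdorff_measure s (f ` E) = 0"
    using hausdorff_measure_lipschitz_image_le[OF assms \<open>0 \<le> s\<close>] by simp
  with \<open>0 \<le> s\<close> show "\<exists>s'. ereal s = ereal s' \<and> 0 \<le> s' \<and> hausdorff_measure s' (f ` E) = 0"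
    by blast
qed

lemma lipschitz_on_fst: "1-lipschitz_on E fst"
  by (rule lipschitz_onI) (simp_all add: dist_fst_le)

lemma lipschitz_on_snd: "1-lipschitz_on E snd"
  by (rule lipschitz_onI) (simp_all add: dist_snd_le)

lemma fst_metric_pairs:
  assumes "closed B" "B \<noteq> {}"
  shows "fst ` metric_pairs A B = A"
proof
  show "A \<subseteq> fst ` metric_pairs A B"
  proof
    fix a assume "a \<in> A"
    obtain b where "b \<in> B" "\<And>y. y \<in> B \<Longrightarrow> dist a b \<le> dist a y"
      using distance_attains_inf[OF assms] by blast
    with \<open>a \<in> A\<close> have "(a, b) \<in> metric_pairs A B"
      by (auto simp: metric_pairs_def nearest_def dist_real_def abs_minus_commute)
    then show "a \<in> fst ` metric_pairs A B"
      by force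
  qed
qed (auto simp: metric_pairs_def)

lemma snd_metric_pairs:
  assumes "closed A" "A \<noteq> {}"
  shows "snd ` metric_pairs A B = B"
proof
  show "B \<subseteq> snd ` metric_pairs A B"
  proof
    fix b assume "b \<in> B"
    obtain a where "a \<in> A" "\<And>y. y \<in> A \<Longrightarrow> dist b a \<le> dist b y"
      using distance_attains_inf[OF assms] by blast
    with \<open>b \<in> B\<close> have "(a, b) \<in> metric_pairs A B"
      by (auto simp: metric_pairs_def nearest_def dist_real_def)
    then show "b \<in> snd ` metric_pairs A B"
      by force
  qed
qed (auto simp: metric_pairs_def)

theorem proposition4p1:
  fixes A B :: "real set"
  assumes "compact A" "A \<noteq> {}" "compact B" "B \<noteq> {}"
  shows "max (hausdorff_dim A) (hausdorff_dim B) \<le> hausdorff_dim (metric_pairs A B)"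
proof -
  have "hausdorff_dim A \<le> hausdorff_dim (metric_pairs A B)"
    using hausdorff_dim_lipschitz_image_le[OF lipschitz_on_fst, of "metric_pairs A B"]
    by (simp add: fst_metric_pairs assms compact_imp_closed)
  moreover have "hausdorff_dim B \<le> hausdorff_dim (metric_pairs A B)"
    using hausdorff_dim_lipschitz_image_le[OF lipschitz_on_snd, of "metric_pairs A B"]
    by (simp add: snd_metric_pairs assms compact_imp_closed)
  ultimately show ?thesis
    by simp
qed

end
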